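(* For every $n \geq 1$, the number of permutations of $\{1,\ldots,n\}$ having exactly one fixed point equals $D_n$.
   Context: A linear arrangement of $\{1,\ldots,n\}$ is a sequence $a_1\cdots a_n$ in which each of $1,\ldots,n$ appears exactly once. It contains the pattern $ij$ if $a_t=i$ and $a_{t+1}=j$ for some $t$; otherwise it avoids it. $D_n$ is the number of linear arrangements of $\{1,\ldots,n\}$ avoiding all of the patterns $12, 23, \ldots, (n-1)n, n1$. *)

theory Defs
  imports "HOL-Combinatorics.Permutations"
begin

definition linear_arrangement :: "nat \<Rightarrow> nat list \<Rightarrow> bool" where
  "linear_arrangement n xs \<longleftrightarrow> distinct xs \<and> set xs = {1..n}"

definition contains_pattern :: "nat list \<Rightarrow> nat \<Rightarrow> nat \<Rightarrow> bool" where
  "contains_pattern xs i j \<longleftrightarrow> (\<exists>t. Suc t < length xs \<and> xs ! t = i \<and> xs ! Suc t = j)"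

definition cyclic_avoiders :: "nat \<Rightarrow> nat list set" where
  "cyclic_avoiders n = {xs. linear_arrangement n xs
      \<and> (\<forall>i\<in>{1..<n}. \<not> contains_pattern xs i (i + 1))
      \<and> \<not> contains_pattern xs n 1}"

definition D :: "nat \<Rightarrow> nat" where
  "D n = card (cyclic_avoiders n)"

end

theory Submission
  imports Defs "HOL-Combinatorics.Multiset_Permutations"
begin

text \<open>Both counts \<open>X\<close> satisfy \<open>n! = (\<Sum>k<n. (n choose k) * X (n - k))\<close>, which determines
  them. For permutations, sort by the fixed-point set: the permutations of \<open>{1..m}\<close> with exactly
  one fixed point number \<open>m * d (m - 1)\<close>, \<open>d\<close> the derangement numbers. For arrangements, sort
  by the set of cyclic successions (\<open>i\<close> immediately followed by \<open>i + 1\<close>, or \<open>n\<close> by \<open>1\<close>):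
  the arrangements with exactly \<open>k\<close> of them number \<open>(n choose k) * D (n - k)\<close>, because rotating
  the values makes every \<open>i\<close> equally likely to start a succession, and deleting \<open>n\<close> from a
  succession \<open>n, 1\<close> removes exactly that succession.\<close>

section \<open>Permutations by fixed points\<close>

lemma card_eq_sum_card_fibres:
  assumes "finite S" "finite T" "g ` S \<subseteq> T"
  shows "card S = (\<Sum>y\<in>T. card {x\<in>S. g x = y})"
  using sum.group[OF assms, of "\<lambda>_. 1::nat"] by (simp only: card_eq_sum)

lemma sum_Pow_card:
  assumes "finite A"
  shows "(\<Sum>F\<in>Pow A. g (card F)) = (\<Sum>k\<le>card A. (card A choose k) * g k)"
proof -
  have "(\<Sum>F\<in>Pow A. g (card F)) = (\<Sum>k\<le>card A. \<Sum>F\<in>{F\<in>Pow A. card F = k}. g (card F))"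
    by (rule sum.group[symmetric]) (use assms in \<open>auto intro: card_mono\<close>)
  also have "\<dots> = (\<Sum>k\<le>card A. (card A choose k) * g k)"
    using n_subsets[OF assms] by (intro sum.cong) auto
  finally show ?thesis .
qed

definition num_derangements :: "nat \<Rightarrow> nat" where
  "num_derangements m = card {p. p permutes {1..m} \<and> (\<forall>x\<in>{1..m}. p x \<noteq> x)}"

lemma card_derangements:
  assumes "finite A"
  shows "card {p. p permutes A \<and> (\<forall>x\<in>A. p x \<noteq> x)} = num_derangements (card A)"
proof -
  obtain h where "bij_betw h A {1..card A}"
    using finite_same_card_bij[of A "{1..card A}"] assms by auto
  then show ?thesis
    unfolding num_derangements_def by (simp add: bij_betw_same_card[OF bij_betw_derangements])
qed

lemma permutes_with_fixpoints_eq: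
  assumes "F \<subseteq> A"
  shows "{p. p permutes A \<and> {x\<in>A. p x = x} = F} = {p. p permutes (A - F) \<and> (\<forall>x\<in>A - F. p x \<noteq> x)}"
proof (intro set_eqI iffI)
  fix p assume "p \<in> {p. p permutes A \<and> {x\<in>A. p x = x} = F}"
  then have p: "p permutes A" "{x\<in>A. p x = x} = F" by auto
  have "p permutes (A - F)"
    unfolding permutes_def
  proof (intro conjI allI impI)
    fix x assume "x \<notin> A - F"
    then show "p x = x" using p permutes_not_in[OF p(1)] by blast
  next
    fix y show "\<exists>!x. p x = y" using p(1) unfolding permutes_def by blast
  qed
  then show "p \<in> {p. p permutes (A - F) \<and> (\<forall>x\<in>A - F. p x \<noteq> x)}" using p by auto
next
  fix p assume "p \<in> {p. p permutes (A - F) \<and> (\<forall>x\<in>A - F. p x \<noteq> x)}"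
  then have p: "p permutes (A - F)" "\<forall>x\<in>A - F. p x \<noteq> x" by auto
  have "{x\<in>A. p x = x} = F" using p permutes_not_in[OF p(1)] assms by blast
  then show "p \<in> {p. p permutes A \<and> {x\<in>A. p x = x} = F}"
    using permutes_subset[OF p(1)] by blast
qed

lemma card_permutes_with_fixpoints:
  assumes "finite A" "F \<subseteq> A"
  shows "card {p. p permutes A \<and> {x\<in>A. p x = x} = F} = num_derangements (card A - card F)"
  using permutes_with_fixpoints_eq[OF assms(2)] card_derangements[of "A - F"] assms
  by (simp add: card_Diff_subset finite_subset)

lemma fact_eq_sum_derangements:
  assumes "finite A"
  shows "fact (card A) = (\<Sum>k\<le>card A. (card A choose k) * num_derangements (card A - k))"
proof -
  let ?S = "{p. p permutes A}"
  have "fact (card A) = card ?S" using card_permutations[OF refl assms] by simp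
  also have "\<dots> = (\<Sum>F\<in>Pow A. card {p\<in>?S. {x\<in>A. p x = x} = F})"
    by (rule card_eq_sum_card_fibres) (use assms finite_permutations in auto)
  also have "\<dots> = (\<Sum>F\<in>Pow A. num_derangements (card A - card F))"
    using card_permutes_with_fixpoints[OF assms] by (intro sum.cong) auto
  also have "\<dots> = (\<Sum>k\<le>card A. (card A choose k) * num_derangements (card A - k))"
    by (rule sum_Pow_card[OF assms])
  finally show ?thesis .
qed

lemma card_permutes_one_fixpoint:
  "card {f. f permutes {1..m} \<and> card {i\<in>{1..m}. f i = i} = 1} = m * num_derangements (m - 1)"
proof -
  let ?A = "{1..m::nat}"
  have "{f. f permutes ?A \<and> card {i\<in>?A. f i = i} = 1}
      = (\<Union>x\<in>?A. {f. f permutes ?A \<and> {i\<in>?A. f i = i} = {x}})"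
    by (auto simp: card_1_singleton_iff)
  also have "card \<dots> = (\<Sum>x\<in>?A. card {f. f permutes ?A \<and> {i\<in>?A. f i = i} = {x}})"
    by (rule card_UN_disjoint) (auto simp: finite_permutations)
  also have "\<dots> = (\<Sum>x\<in>?A. num_derangements (m - 1))"
    by (intro sum.cong refl) (subst card_permutes_with_fixpoints, auto)
  finally show ?thesis by simp
qed

lemma fact_eq_sum_one_fixpoint:
  assumes "n \<ge> 1"
  shows "fact n = (\<Sum>k<n. (n choose k) * card {f. f permutes {1..n-k} \<and> card {i\<in>{1..n-k}. f i = i} = 1})"
proof -
  have "(\<Sum>k<n. (n choose k) * card {f. f permutes {1..n-k} \<and> card {i\<in>{1..n-k}. f i = i} = 1})
      = (\<Sum>k<n. ((n - k) * (n choose k)) * num_derangements (n - 1 - k))"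
    unfolding card_permutes_one_fixpoint by (simp add: mult_ac)
  also have "\<dots> = n * (\<Sum>k\<le>n-1. ((n - 1) choose k) * num_derangements (n - 1 - k))"
  proof -
    have "{..<n} = {..n-1}" using assms by auto
    then show ?thesis
      by (simp add: binomial_absorb_comp sum_distrib_left mult.assoc)
  qed
  also have "\<dots> = n * fact (n - 1)"
    using fact_eq_sum_derangements[of "{1..n-1}"] by simp
  also have "\<dots> = fact n"
    using assms by (simp add: fact_reduce)
  finally show ?thesis by simp
qed

section \<open>Cyclic successions\<close>

definition cyclic_succ :: "nat \<Rightarrow> nat \<Rightarrow> nat" where
  "cyclic_succ n x = (if x = n then 1 else Suc x)"

fun cyclic_successions :: "nat \<Rightarrow> nat list \<Rightarrow> nat set" where
  "cyclic_successions n (x # y # ys) =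
     (if y = cyclic_succ n x then insert x (cyclic_successions n (y # ys))
      else cyclic_successions n (y # ys))"
| "cyclic_successions n _ = {}"

lemma cyclic_successions_Cons:
  "cyclic_successions n (x # xs) =
     (if xs \<noteq> [] \<and> hd xs = cyclic_succ n x then insert x (cyclic_successions n xs)
      else cyclic_successions n xs)"
  by (cases xs) auto

lemma cyclic_successions_subset: "cyclic_successions n xs \<subseteq> set (butlast xs)"
  by (induction n xs rule: cyclic_successions.induct) auto

lemma finite_cyclic_successions [simp]: "finite (cyclic_successions n xs)"
  using cyclic_successions_subset finite_subset by blast

lemma mem_cyclic_successions_iff:
  "z \<in> cyclic_successions n xs \<longleftrightarrow>
     (\<exists>t. Suc t < length xs \<and> xs ! t = z \<and> xs ! Suc t = cyclic_succ n z)"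
proof (induction xs)
  case (Cons x xs)
  show ?case
  proof
    assume z: "z \<in> cyclic_successions n (x # xs)"
    show "\<exists>t. Suc t < length (x # xs) \<and> (x # xs) ! t = z \<and> (x # xs) ! Suc t = cyclic_succ n z"
    proof (cases "xs \<noteq> [] \<and> hd xs = cyclic_succ n x \<and> z = x")
      case True
      then show ?thesis by (intro exI[of _ 0]) (auto simp: hd_conv_nth)
    next
      case False
      then have "z \<in> cyclic_successions n xs"
        using z by (auto simp: cyclic_successions_Cons split: if_splits)
      then obtain t where "Suc t < length xs" "xs ! t = z" "xs ! Suc t = cyclic_succ n z"
        using Cons.IH by auto
      then show ?thesis by (intro exI[of _ "Suc t"]) auto
    qed
  next
    assume "\<exists>t. Suc t < length (x # xs) \<and> (x # xs) ! t = z \<and> (x # xs) ! Suc t = cyclic_succ n z"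
    then obtain t where t: "Suc t < length (x # xs)" "(x # xs) ! t = z"
      "(x # xs) ! Suc t = cyclic_succ n z" by blast
    show "z \<in> cyclic_successions n (x # xs)"
    proof (cases t)
      case 0
      then show ?thesis using t by (auto simp: cyclic_successions_Cons hd_conv_nth)
    next
      case (Suc t')
      then have "z \<in> cyclic_successions n xs" using Cons.IH t by auto
      then show ?thesis by (auto simp: cyclic_successions_Cons)
    qed
  qed
qed simp

lemma cyclic_successions_append:
  "cyclic_successions n (xs @ ys) = cyclic_successions n xs \<union> cyclic_successions n ys \<union>
     (if xs \<noteq> [] \<and> ys \<noteq> [] \<and> hd ys = cyclic_succ n (last xs) then {last xs} else {})"
proof (induction xs)
  case (Cons x xs)
  show ?case
  proof (cases "xs = []")
    case False
    then have "hd (xs @ ys) = hd xs" "last (x # xs) = last xs" by simp_all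
    then show ?thesis using Cons.IH False by (auto simp: cyclic_successions_Cons)
  qed (simp add: cyclic_successions_Cons)
qed simp

lemma cyclic_successions_map:
  assumes g: "bij_betw g {1..n} {1..n}" "\<forall>x\<in>{1..n}. g (cyclic_succ n x) = cyclic_succ n (g x)"
    and "n \<ge> 1" "set xs \<subseteq> {1..n}"
  shows "cyclic_successions n (map g xs) = g ` cyclic_successions n xs"
  using \<open>set xs \<subseteq> {1..n}\<close>
proof (induction xs)
  case (Cons x xs)
  have x: "x \<in> {1..n}" "cyclic_succ n x \<in> {1..n}"
    using Cons.prems \<open>n \<ge> 1\<close> by (auto simp: cyclic_succ_def)
  have "(map g xs \<noteq> [] \<and> hd (map g xs) = cyclic_succ n (g x)) \<longleftrightarrow>
        (xs \<noteq> [] \<and> hd xs = cyclic_succ n x)"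
  proof (cases xs)
    case (Cons z zs)
    then have "z \<in> {1..n}" using Cons.prems by auto
    then have "g z = g (cyclic_succ n x) \<longleftrightarrow> z = cyclic_succ n x"
      using x bij_betw_imp_inj_on[OF g(1)] by (auto dest: inj_onD)
    then show ?thesis using Cons g(2) x by simp
  qed simp
  then show ?case using Cons by (simp add: cyclic_successions_Cons)
qed simp

definition insert_before_one :: "nat \<Rightarrow> nat list \<Rightarrow> nat list" where
  "insert_before_one n ys = concat (map (\<lambda>y. if y = 1 then [n, 1] else [y]) ys)"

lemma insert_before_one_Nil [simp]: "insert_before_one n [] = []"
  by (simp add: insert_before_one_def)

lemma insert_before_one_Cons [simp]:
  "insert_before_one n (y # ys) = (if y = 1 then [n, 1] else [y]) @ insert_before_one n ys"
  by (simp add: insert_before_one_def)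

lemma insert_before_one_append [simp]:
  "insert_before_one n (xs @ ys) = insert_before_one n xs @ insert_before_one n ys"
  by (simp add: insert_before_one_def)

lemma set_insert_before_one:
  "set (insert_before_one n ys) = set ys \<union> (if 1 \<in> set ys then {n} else {})"
  by (induction ys) auto

lemma insert_before_one_id: "1 \<notin> set ys \<Longrightarrow> insert_before_one n ys = ys"
  by (induction ys) auto

lemma distinct_insert_before_one:
  "distinct ys \<Longrightarrow> n \<notin> set ys \<Longrightarrow> distinct (insert_before_one n ys)"
  by (induction ys) (auto simp: set_insert_before_one)

lemma removeAll_insert_before_one:
  "n \<noteq> 1 \<Longrightarrow> n \<notin> set ys \<Longrightarrow> removeAll n (insert_before_one n ys) = ys"
  by (induction ys) auto

text \<open>Inserting \<open>n\<close> before \<open>1\<close> turns the succession \<open>n-1, 1\<close> modulo \<open>n-1\<close> into the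
  succession \<open>n-1, n\<close> modulo \<open>n\<close>, and creates the succession \<open>n, 1\<close>.\<close>
lemma cyclic_successions_insert_before_one:
  assumes "set ys \<subseteq> {1..n-1}" "n \<ge> 2"
  shows "cyclic_successions n (insert_before_one n ys) =
           cyclic_successions (n-1) ys \<union> (if 1 \<in> set ys then {n} else {})"
  using assms
proof (induction ys)
  case (Cons y ys)
  let ?p = "if y = 1 then [n, 1] else [y]"
  have y: "1 \<le> y" "y \<le> n - 1" using Cons.prems by auto
  have p: "cyclic_successions n ?p = (if y = 1 then {n} else {})" "last ?p = y" "?p \<noteq> []"
    by (auto simp: cyclic_succ_def)
  have hd: "(insert_before_one n ys \<noteq> [] \<and> hd (insert_before_one n ys) = cyclic_succ n y)
      \<longleftrightarrow> (ys \<noteq> [] \<and> hd ys = cyclic_succ (n-1) y)"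
  proof (cases ys)
    case (Cons z zs)
    have "1 \<le> z" "z \<le> n - 1" using Cons.prems \<open>ys = z # zs\<close> by auto
    then show ?thesis using y \<open>n \<ge> 2\<close> \<open>ys = z # zs\<close> by (auto simp: cyclic_succ_def)
  qed simp
  have "cyclic_successions n (insert_before_one n (y # ys))
      = cyclic_successions n ?p \<union> cyclic_successions n (insert_before_one n ys) \<union>
          (if insert_before_one n ys \<noteq> [] \<and> hd (insert_before_one n ys) = cyclic_succ n y
           then {y} else {})"
    by (simp only: insert_before_one_Cons cyclic_successions_append p simp_thms)
  then show ?case
    using Cons p(1) unfolding hd cyclic_successions_Cons[of "n-1" y ys]
    by (cases "y = 1"; cases "1 \<in> set ys"; simp; blast)
qed simp

section \<open>Counting arrangements by cyclic successions\<close>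

abbreviation arrangements :: "nat \<Rightarrow> nat list set" where
  "arrangements n \<equiv> permutations_of_set {1..n}"

definition num_with_successions :: "nat \<Rightarrow> nat \<Rightarrow> nat" where
  "num_with_successions n k = card {xs\<in>arrangements n. card (cyclic_successions n xs) = k}"

definition with_succession_at :: "nat \<Rightarrow> nat \<Rightarrow> nat \<Rightarrow> nat list set" where
  "with_succession_at n k i =
     {xs\<in>arrangements n. card (cyclic_successions n xs) = k \<and> i \<in> cyclic_successions n xs}"

lemma finite_arrangements_filter [simp]: "finite {xs\<in>arrangements n. P xs}"
  using finite_permutations_of_set[of "{1..n}"] by simp

lemma cyclic_successions_subset_range:
  "xs \<in> arrangements n \<Longrightarrow> cyclic_successions n xs \<subseteq> {1..n}"
  using cyclic_successions_subset[of n xs] in_set_butlastD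
  by (fastforce simp: permutations_of_set_def)

lemma insert_before_one_arrangement:
  assumes "n \<ge> 2" "ys \<in> arrangements (n-1)"
  shows "insert_before_one n ys \<in> arrangements n"
    and "removeAll n (insert_before_one n ys) = ys"
    and "cyclic_successions n (insert_before_one n ys) = insert n (cyclic_successions (n-1) ys)"
    and "n \<notin> cyclic_successions (n-1) ys"
proof -
  have ys: "set ys = {1..n-1}" "distinct ys" using assms(2) by (simp_all add: permutations_of_set_def)
  then have "n \<notin> set ys" "1 \<in> set ys" using assms(1) by auto
  moreover have "{1..n-1} \<union> {n} = {1..n}" using assms(1) by auto
  ultimately show "insert_before_one n ys \<in> arrangements n"
    using ys distinct_insert_before_one
    by (simp add: permutations_of_set_def set_insert_before_one)
  show "removeAll n (insert_before_one n ys) = ys"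
    using \<open>n \<notin> set ys\<close> assms(1) by (simp add: removeAll_insert_before_one)
  show "cyclic_successions n (insert_before_one n ys) = insert n (cyclic_successions (n-1) ys)"
    using cyclic_successions_insert_before_one[of ys n] ys(1) \<open>1 \<in> set ys\<close> assms(1) by simp
  show "n \<notin> cyclic_successions (n-1) ys"
    using cyclic_successions_subset_range[OF assms(2)] assms(1) by auto
qed

lemma removeAll_arrangement:
  assumes "n \<ge> 2" "xs \<in> arrangements n" "n \<in> cyclic_successions n xs"
  shows "removeAll n xs \<in> arrangements (n-1)" and "insert_before_one n (removeAll n xs) = xs"
proof -
  obtain t where t: "Suc t < length xs" "xs ! t = n" "xs ! Suc t = 1"
    using assms(3) by (auto simp: mem_cyclic_successions_iff cyclic_succ_def)
  have "xs = take t xs @ xs ! t # xs ! Suc t # drop (Suc (Suc t)) xs"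
    using t(1) by (metis Cons_nth_drop_Suc Suc_lessD append_take_drop_id)
  then obtain as bs where xs: "xs = as @ n # 1 # bs" using t by metis
  have "distinct xs" "set xs = {1..n}" using assms(2) by (simp_all add: permutations_of_set_def)
  then have "distinct (as @ n # 1 # bs)" unfolding xs by simp
  then have d: "n \<notin> set as" "n \<notin> set bs" "1 \<notin> set as" "1 \<notin> set bs" "n \<noteq> 1"
    using assms(1) by auto
  then have "removeAll n xs = as @ 1 # bs" unfolding xs by simp
  then show "insert_before_one n (removeAll n xs) = xs"
    unfolding xs using d by (simp add: insert_before_one_id)
  have "set (removeAll n xs) = {1..n} - {n}" using \<open>set xs = {1..n}\<close> by simp
  also have "\<dots> = {1..n-1}" by (cases n) (auto simp: atLeastAtMostSuc_conv)
  finally have "set (removeAll n xs) = {1..n-1}" .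
  then show "removeAll n xs \<in> arrangements (n-1)"
    using \<open>distinct xs\<close> by (simp add: permutations_of_set_def distinct_removeAll)
qed

lemma card_with_succession_at_top:
  assumes "n \<ge> 2" "k \<ge> 1"
  shows "card (with_succession_at n k n) = num_with_successions (n-1) (k-1)"
proof -
  let ?A = "{ys\<in>arrangements (n-1). card (cyclic_successions (n-1) ys) = k-1}"
  let ?B = "{xs\<in>arrangements n. card (cyclic_successions n xs) = k \<and> n \<in> cyclic_successions n xs}"
  have "bij_betw (insert_before_one n) ?A ?B"
  proof (rule bij_betw_byWitness[where f'="removeAll n"])
    show "\<forall>ys\<in>?A. removeAll n (insert_before_one n ys) = ys"
      using insert_before_one_arrangement(2)[OF assms(1)] by simp
    show "\<forall>xs\<in>?B. insert_before_one n (removeAll n xs) = xs"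
      using removeAll_arrangement(2)[OF assms(1)] by simp
    show "insert_before_one n ` ?A \<subseteq> ?B"
    proof (rule image_subsetI)
      fix ys assume "ys \<in> ?A"
      then have ys: "ys \<in> arrangements (n-1)" "card (cyclic_successions (n-1) ys) = k-1" by auto
      note ins = insert_before_one_arrangement[OF assms(1) ys(1)]
      have "card (cyclic_successions n (insert_before_one n ys)) = k"
        unfolding ins(3) using ins(4) ys(2) assms(2) by simp
      then show "insert_before_one n ys \<in> ?B" using ins(1,3) by simp
    qed
    show "removeAll n ` ?B \<subseteq> ?A"
    proof (rule image_subsetI)
      fix xs assume "xs \<in> ?B"
      then have xs: "xs \<in> arrangements n" "n \<in> cyclic_successions n xs"
        "card (cyclic_successions n xs) = k" by auto
      then have ys: "removeAll n xs \<in> arrangements (n-1)"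
        "insert_before_one n (removeAll n xs) = xs"
        using removeAll_arrangement[OF assms(1)] by auto
      have "cyclic_successions n xs = insert n (cyclic_successions (n-1) (removeAll n xs))"
        using insert_before_one_arrangement(3)[OF assms(1) ys(1)] ys(2) by simp
      then show "removeAll n xs \<in> ?A"
        using insert_before_one_arrangement(4)[OF assms(1) ys(1)] xs(3) ys(1) by simp
    qed
  qed
  then show ?thesis
    unfolding num_with_successions_def with_succession_at_def by (simp add: bij_betw_same_card)
qed

lemma bij_betw_cyclic_succ: "bij_betw (cyclic_succ n) {1..n} {1..n}"
proof -
  have "inj_on (cyclic_succ n) {1..n}" by (auto simp: cyclic_succ_def inj_on_def)
  moreover have "cyclic_succ n ` {1..n} \<subseteq> {1..n}" by (auto simp: cyclic_succ_def)
  ultimately show "bij_betw (cyclic_succ n) {1..n} {1..n}"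
    by (simp add: bij_betw_def endo_inj_surj)
qed

lemma funpow_cyclic_succ: "1 \<le> i \<Longrightarrow> i + j \<le> n \<Longrightarrow> (cyclic_succ n ^^ j) i = i + j"
  by (induction j) (auto simp: cyclic_succ_def)

lemma funpow_cyclic_succ_top:
  assumes "1 \<le> i" "i \<le> n"
  shows "(cyclic_succ n ^^ i) n = i"
proof -
  obtain j where j: "i = Suc j" using assms by (cases i) auto
  have "(cyclic_succ n ^^ i) n = (cyclic_succ n ^^ j) 1"
    unfolding j funpow_Suc_right by (simp add: cyclic_succ_def)
  also have "\<dots> = i" using funpow_cyclic_succ[of 1 j n] assms j by simp
  finally show ?thesis .
qed

lemma card_with_succession_at_le:
  assumes g: "bij_betw g {1..n} {1..n}" "\<forall>x\<in>{1..n}. g (cyclic_succ n x) = cyclic_succ n (g x)"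
    and "n \<ge> 1"
  shows "card (with_succession_at n k i) \<le> card (with_succession_at n k (g i))"
proof (rule card_inj_on_le[where f="map g"])
  have inj: "inj_on g {1..n}" using bij_betw_imp_inj_on[OF g(1)] .
  show "inj_on (map g) (with_succession_at n k i)"
  proof (rule inj_onI)
    fix xs ys
    assume "xs \<in> with_succession_at n k i" "ys \<in> with_succession_at n k i"
    then have "set xs = {1..n}" "set ys = {1..n}"
      by (simp_all add: with_succession_at_def permutations_of_set_def)
    then show "map g xs = map g ys \<Longrightarrow> xs = ys" using map_inj_on inj by (metis Un_absorb)
  qed
  show "map g ` with_succession_at n k i \<subseteq> with_succession_at n k (g i)"
  proof (rule image_subsetI)
    fix xs assume "xs \<in> with_succession_at n k i"
    then have xs: "set xs = {1..n}" "distinct xs" "card (cyclic_successions n xs) = k"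
      "i \<in> cyclic_successions n xs" "xs \<in> arrangements n"
      by (auto simp: with_succession_at_def permutations_of_set_def)
    have succ: "cyclic_successions n (map g xs) = g ` cyclic_successions n xs"
      using cyclic_successions_map[OF g \<open>n \<ge> 1\<close>] xs(1) by simp
    have "inj_on g (cyclic_successions n xs)"
      using inj_on_subset[OF inj cyclic_successions_subset_range[OF xs(5)]] .
    then have "card (cyclic_successions n (map g xs)) = k" using succ xs(3) by (simp add: card_image)
    moreover have "map g xs \<in> arrangements n"
      using xs(1,2) inj bij_betw_imp_surj_on[OF g(1)] by (simp add: permutations_of_set_def distinct_map)
    ultimately show "map g xs \<in> with_succession_at n k (g i)"
      using succ xs(4) by (simp add: with_succession_at_def)
  qed
qed (simp add: with_succession_at_def)

lemma card_with_succession_at_eq: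
  assumes "i \<in> {1..n}"
  shows "card (with_succession_at n k i) = card (with_succession_at n k n)"
proof -
  have "n \<ge> 1" using assms by simp
  have rot: "bij_betw (cyclic_succ n ^^ j) {1..n} {1..n}"
    "\<forall>x\<in>{1..n}. (cyclic_succ n ^^ j) (cyclic_succ n x) = cyclic_succ n ((cyclic_succ n ^^ j) x)" for j
    using bij_betw_funpow[OF bij_betw_cyclic_succ] by (simp_all add: funpow_swap1)
  have "(cyclic_succ n ^^ (n - i)) i = n" "(cyclic_succ n ^^ i) n = i"
    using funpow_cyclic_succ[of i "n - i" n] funpow_cyclic_succ_top[of i n] assms by auto
  then show ?thesis
    using card_with_succession_at_le[OF rot \<open>n \<ge> 1\<close>, of k i "n - i"]
      card_with_succession_at_le[OF rot \<open>n \<ge> 1\<close>, of k n i]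
    by (simp only: antisym)
qed

text \<open>Double counting of the pairs \<open>(xs, i)\<close> with \<open>i\<close> a cyclic succession of \<open>xs\<close>.\<close>
lemma num_with_successions_rec:
  assumes "n \<ge> 2" "k \<ge> 1"
  shows "k * num_with_successions n k = n * num_with_successions (n-1) (k-1)"
proof -
  let ?S = "{xs\<in>arrangements n. card (cyclic_successions n xs) = k}"
  have "{i\<in>{1..n}. i \<in> cyclic_successions n xs} = cyclic_successions n xs" if "xs \<in> ?S" for xs
    using cyclic_successions_subset_range[of xs n] that by blast
  then have "\<forall>xs\<in>?S. card {i\<in>{1..n}. i \<in> cyclic_successions n xs} = k" by simp
  then have "(\<Sum>i\<in>{1..n}. card {xs\<in>?S. i \<in> cyclic_successions n xs}) = k * card ?S"
    by (intro sum_multicount) auto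
  moreover have "card {xs\<in>?S. i \<in> cyclic_successions n xs} = num_with_successions (n-1) (k-1)"
    if "i \<in> {1..n}" for i
  proof -
    have "{xs\<in>?S. i \<in> cyclic_successions n xs} = with_succession_at n k i"
      unfolding with_succession_at_def by blast
    then show ?thesis
      using card_with_succession_at_eq[OF that, of k]
        card_with_succession_at_top[OF assms] by simp
  qed
  ultimately show ?thesis unfolding num_with_successions_def by simp
qed

lemma num_with_successions_eq:
  "k < n \<Longrightarrow> num_with_successions n k = (n choose k) * num_with_successions (n-k) 0"
proof (induction k arbitrary: n)
  case (Suc k)
  then obtain m where m: "n = Suc m" "k < m" by (cases n) auto
  have "Suc k * num_with_successions n (Suc k) = Suc m * num_with_successions m k"
    using num_with_successions_rec[of n "Suc k"] m by simp
  also have "\<dots> = (Suc m * (m choose k)) * num_with_successions (m-k) 0"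
    using Suc.IH[OF m(2)] by (simp only: mult.assoc)
  also have "\<dots> = Suc k * ((n choose Suc k) * num_with_successions (n - Suc k) 0)"
    unfolding m Suc_times_binomial[symmetric] by (simp add: algebra_simps)
  finally show ?case by (simp only: mult_cancel1 nat.distinct simp_thms)
qed simp

lemma card_cyclic_successions_less:
  assumes "n \<ge> 1" "xs \<in> arrangements n"
  shows "card (cyclic_successions n xs) < n"
proof -
  have "length xs = n"
    using assms(2) distinct_card[of xs] by (simp add: permutations_of_set_def)
  have "card (cyclic_successions n xs) \<le> card (set (butlast xs))"
    by (rule card_mono[OF _ cyclic_successions_subset]) simp
  also have "\<dots> \<le> length (butlast xs)" by (rule card_length)
  also have "\<dots> < n" using \<open>length xs = n\<close> assms(1) by simp
  finally show ?thesis .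
qed

lemma fact_eq_sum_num_with_successions:
  assumes "n \<ge> 1"
  shows "fact n = (\<Sum>k<n. num_with_successions n k)"
proof -
  have "fact n = card (arrangements n)" by (simp add: card_permutations_of_set)
  also have "\<dots> = (\<Sum>k<n. num_with_successions n k)"
    unfolding num_with_successions_def
    by (rule card_eq_sum_card_fibres) (use card_cyclic_successions_less[OF assms] in auto)
  finally show ?thesis .
qed

lemma contains_pattern_cyclic_succ_iff:
  "contains_pattern xs i (cyclic_succ n i) \<longleftrightarrow> i \<in> cyclic_successions n xs"
  unfolding contains_pattern_def mem_cyclic_successions_iff by blast

lemma cyclic_avoiders_eq: "cyclic_avoiders n = {xs\<in>arrangements n. cyclic_successions n xs = {}}"
proof -
  have "(\<forall>i\<in>{1..<n}. \<not> contains_pattern xs i (i + 1)) \<and> \<not> contains_pattern xs n 1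
      \<longleftrightarrow> cyclic_successions n xs = {}" if xs: "xs \<in> arrangements n" for xs
  proof (cases "n = 0")
    case True
    then show ?thesis using xs by (simp add: contains_pattern_def)
  next
    case False
    then have "{1..n} = insert n {1..<n}" by auto
    then have "cyclic_successions n xs = {} \<longleftrightarrow>
        (\<forall>i\<in>insert n {1..<n}. \<not> contains_pattern xs i (cyclic_succ n i))"
      using cyclic_successions_subset_range[OF xs] by (auto simp: contains_pattern_cyclic_succ_iff)
    then show ?thesis by (auto simp: cyclic_succ_def)
  qed
  moreover have "linear_arrangement n xs \<longleftrightarrow> xs \<in> arrangements n" for xs
    by (auto simp: linear_arrangement_def permutations_of_set_def)
  ultimately show ?thesis unfolding cyclic_avoiders_def by blast
qed

lemma fact_eq_sum_D:
  assumes "n \<ge> 1"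
  shows "fact n = (\<Sum>k<n. (n choose k) * D (n - k))"
proof -
  have "D m = num_with_successions m 0" for m
    unfolding D_def num_with_successions_def cyclic_avoiders_eq by simp
  then have "num_with_successions n k = (n choose k) * D (n - k)" if "k < n" for k
    using num_with_successions_eq[OF that] by simp
  then show ?thesis
    using fact_eq_sum_num_with_successions[OF assms] by simp
qed

lemma binomial_recurrence_unique:
  fixes c X Y :: "nat \<Rightarrow> nat"
  assumes X: "\<And>m. m \<ge> 1 \<Longrightarrow> c m = (\<Sum>k<m. (m choose k) * X (m - k))"
    and Y: "\<And>m. m \<ge> 1 \<Longrightarrow> c m = (\<Sum>k<m. (m choose k) * Y (m - k))"
    and "n \<ge> 1"
  shows "X n = Y n"
  using \<open>n \<ge> 1\<close>
proof (induction n rule: less_induct)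
  case (less n)
  have split: "(\<Sum>k<n. (n choose k) * Z (n - k)) = Z n + (\<Sum>k\<in>{1..<n}. (n choose k) * Z (n - k))"
    for Z :: "nat \<Rightarrow> nat"
  proof -
    have "{..<n} = insert 0 {1..<n}" using less.prems by auto
    then show ?thesis by simp
  qed
  have "(\<Sum>k\<in>{1..<n}. (n choose k) * X (n - k)) = (\<Sum>k\<in>{1..<n}. (n choose k) * Y (n - k))"
    using less.IH by (intro sum.cong) auto
  then show ?case using X[OF less.prems] Y[OF less.prems] split[of X] split[of Y] by simp
qed

theorem proposition6p1:
  fixes n :: nat
  assumes "n \<ge> 1"
  shows "card {f. f permutes {1..n} \<and> card {i\<in>{1..n}. f i = i} = 1} = D n"
  using binomial_recurrence_unique[OF fact_eq_sum_one_fixpoint fact_eq_sum_D assms] .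

end
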